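(* Let $0<a<r$ and let $M_{r,a}$ be the open Möbius strip covered by two charts with coordinates $(\varphi,\tau)$, $\tau\in(-a,a)$, related on overlaps by $(\varphi,\tau)=(\bar\varphi,\bar\tau)$ for $\bar\varphi\in(0,\pi)$ and $(\varphi,\tau)=(\bar\varphi-2\pi,-\bar\tau)$ for $\bar\varphi\in(\pi,2\pi)$ (embedded in $\mathbb{R}^3$ as $((r+\tau\cos\frac\varphi2)\cos\varphi,(r+\tau\cos\frac\varphi2)\sin\varphi,\tau\sin\frac\varphi2)$). Put $g(\varphi,\tau)=(r+\tau\cos\frac\varphi2)^2+\frac{\tau^2}{4}$ and $k(\varphi,\tau)=4\cos\frac\varphi2\,(r+\tau\cos\frac\varphi2)+\tau$, and let $\varepsilon=(\varepsilon_\varphi\omega^\varphi+\varepsilon_\tau\omega^\tau)\wedge dt$ with $\varepsilon_\varphi=\tfrac12\dot\varphi^2\tau\sin\frac\varphi2(r+\tau\cos\frac\varphi2)-\tfrac12\dot\varphi\dot\tau\,k-g\ddot\varphi$, $\varepsilon_\tau=\tfrac14\dot\varphi^2k-\ddot\tau$. Then $\varepsilon$ is a globally defined, globally variational source form on $\mathbb{R}\times T^2M_{r,a}$, and $\lambda=\mathscr L\,dt$ with $$\mathscr L=-\tfrac12\dot\varphi^3\tau\sin\tfrac\varphi2\big(r+\tau\cos\tfrac\varphi2\big)t+\tfrac14\dot\varphi^2\dot\tau\,k\,t+g\dot\varphi\ddot\varphi\,t+\dot\tau\ddot\tau\,t+g\dot\varphi^2+\dot\tau^2$$ is a global Lagrange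 function on $\mathbb{R}\times T^2M_{r,a}$ with $E_\lambda=\varepsilon$.
   Context: For a $2$-manifold $M$ with local coordinates $(q^1,q^2)$, $\mathbb{R}\times T^2M$ has coordinates $(t,q^i,\dot q^i,\ddot q^i)$; contact forms $\omega^{i}=dq^i-\dot q^i dt$. A source form is $\varepsilon=\sum_i\varepsilon_i\omega^i\wedge dt$. For a (possibly second-order) Lagrange function $\mathscr L(t,q,\dot q,\ddot q)$, the Euler–Lagrange form is $E_\lambda=\sum_iE_i(\mathscr L)\omega^i\wedge dt$ with $E_i(\mathscr L)=\partial\mathscr L/\partial q^i-\frac{d}{dt}\partial\mathscr L/\partial\dot q^i+\frac{d^2}{dt^2}\partial\mathscr L/\partial\ddot q^i$, $d/dt$ the total derivative. Globally variational: there is a Lagrange function defined on all of the jet space whose Euler–Lagrange form is $\varepsilon$. *)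

theory Defs
  imports "HOL-Analysis.Analysis"
begin

text \<open>Points of the jet space over a chart of a 2-manifold: a time t :: real and
  jet coordinates x :: nat => nat => real, where x k i is the k-th time derivative
  of the i-th coordinate q^i (i = 0: phi, i = 1: tau).  Order k <= 4 suffices for
  everything below (the Euler-Lagrange expressions of a second order Lagrangian
  live on the 4-jet).\<close>

type_synonym jet = "nat \<Rightarrow> nat \<Rightarrow> real"

definition pdq :: "nat \<Rightarrow> nat \<Rightarrow> (real \<Rightarrow> jet \<Rightarrow> real) \<Rightarrow> real \<Rightarrow> jet \<Rightarrow> real" where
  "pdq k i F t x = deriv (\<lambda>s. F t (x(k := (x k)(i := s)))) (x k i)"

definition pdt :: "(real \<Rightarrow> jet \<Rightarrow> real) \<Rightarrow> real \<Rightarrow> jet \<Rightarrow> real" where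
  "pdt F t x = deriv (\<lambda>s. F s x) t"

text \<open>Total derivative d/dt (for functions depending on jets of order at most 3).\<close>
definition TD :: "(real \<Rightarrow> jet \<Rightarrow> real) \<Rightarrow> real \<Rightarrow> jet \<Rightarrow> real" where
  "TD F t x = pdt F t x + (\<Sum>k<4. \<Sum>i<2. x (Suc k) i * pdq k i F t x)"

definition EL :: "(real \<Rightarrow> jet \<Rightarrow> real) \<Rightarrow> nat \<Rightarrow> real \<Rightarrow> jet \<Rightarrow> real" where
  "EL L i t x = pdq 0 i L t x - TD (pdq 1 i L) t x + TD (TD (pdq 2 i L)) t x"

text \<open>The data of the Moebius strip example (same formulas in both charts).\<close>
definition gM :: "real \<Rightarrow> real \<Rightarrow> real \<Rightarrow> real" where
  "gM r \<phi> \<tau> = (r + \<tau> * cos (\<phi>/2))^2 + \<tau>^2 / 4"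

definition kM :: "real \<Rightarrow> real \<Rightarrow> real \<Rightarrow> real" where
  "kM r \<phi> \<tau> = 4 * cos (\<phi>/2) * (r + \<tau> * cos (\<phi>/2)) + \<tau>"

definition epsM :: "real \<Rightarrow> nat \<Rightarrow> real \<Rightarrow> jet \<Rightarrow> real" where
  "epsM r i t x =
     (let \<phi> = x 0 0; \<tau> = x 0 1; d\<phi> = x 1 0; d\<tau> = x 1 1; dd\<phi> = x 2 0; dd\<tau> = x 2 1 in
      if i = 0 then
        1/2 * d\<phi>^2 * \<tau> * sin (\<phi>/2) * (r + \<tau> * cos (\<phi>/2)) - 1/2 * d\<phi> * d\<tau> * kM r \<phi> \<tau>
        - gM r \<phi> \<tau> * dd\<phi>
      else 1/4 * d\<phi>^2 * kM r \<phi> \<tau> - dd\<tau>)"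

definition LagM :: "real \<Rightarrow> real \<Rightarrow> jet \<Rightarrow> real" where
  "LagM r t x =
     (let \<phi> = x 0 0; \<tau> = x 0 1; d\<phi> = x 1 0; d\<tau> = x 1 1; dd\<phi> = x 2 0; dd\<tau> = x 2 1 in
      - 1/2 * d\<phi>^3 * \<tau> * sin (\<phi>/2) * (r + \<tau> * cos (\<phi>/2)) * t
      + 1/4 * d\<phi>^2 * d\<tau> * kM r \<phi> \<tau> * t
      + gM r \<phi> \<tau> * d\<phi> * dd\<phi> * t + d\<tau> * dd\<tau> * t
      + gM r \<phi> \<tau> * d\<phi>^2 + d\<tau>^2)"

definition chartA :: "real \<Rightarrow> jet set" where
  "chartA a = {x. - pi < x 0 0 \<and> x 0 0 < pi \<and> - a < x 0 1 \<and> x 0 1 < a}"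

definition chartB :: "real \<Rightarrow> jet set" where
  "chartB a = {x. 0 < x 0 0 \<and> x 0 0 < 2 * pi \<and> - a < x 0 1 \<and> x 0 1 < a}"

text \<open>Prolonged transition map on the overlap part phi-bar in (pi,2pi):
  (phi,tau) = (phi-bar - 2 pi, - tau-bar), hence all derivatives of tau change sign.
  (On the part phi-bar in (0,pi) the transition is the identity.)\<close>
definition transBA :: "jet \<Rightarrow> jet" where
  "transBA x = (\<lambda>k i. if i = 1 then - x k 1 else if i = 0 \<and> k = 0 then x 0 0 - 2 * pi else x k i)"

end

theory Submission imports Defs begin

(*
  The coefficient g is the metric induced by the embedding, ds^2 = g dphi^2 + dtau^2, and for the
  kinetic energy E = (g phi'^2 + tau'^2)/2 the Lagrange function is L = t dE/dt + 2E = d/dt(tE) + E.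
  A total derivative has vanishing Euler-Lagrange expressions, so E_lambda is the Euler-Lagrange form
  of E, which is eps because g_phi = - tau sin(phi/2) (r + tau cos(phi/2)) and g_tau = k/2.
  Rather than invoking that general fact, the Euler-Lagrange expressions of L are computed directly
  for an arbitrary coefficient g with symmetric second partial derivatives.  The transition
  (phi, tau) -> (phi - 2 pi, - tau) preserves g, hence E and L, and reverses the sign of g_tau,
  hence of eps_tau, as required by omega^tau = - omega^tau-bar.
*)

definition has_partial_derivatives ::
    "(real \<Rightarrow> real \<Rightarrow> real) \<Rightarrow> (real \<Rightarrow> real \<Rightarrow> real) \<Rightarrow> (real \<Rightarrow> real \<Rightarrow> real) \<Rightarrow> bool"
  where "has_partial_derivatives f f_u f_v \<longleftrightarrow>
    (\<forall>u v. ((\<lambda>p. f (fst p) (snd p)) has_derivative (\<lambda>p. fst p * f_u u v + snd p * f_v u v))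
             (at (u, v)))"

lemma has_partial_derivatives_chain:
  assumes "has_partial_derivatives f f_u f_v"
    and "(p has_real_derivative p') (at y)" and "(q has_real_derivative q') (at y)"
    and "D = p' * f_u (p y) (q y) + q' * f_v (p y) (q y)"
  shows "((\<lambda>z. f (p z) (q z)) has_real_derivative D) (at y)"
proof -
  have "((\<lambda>z. (p z, q z)) has_derivative (\<lambda>d. (p' * d, q' * d))) (at y)"
    using assms(2,3) by (auto intro!: has_derivative_Pair simp: has_field_derivative_def)
  from has_derivative_compose[OF this] assms(1)
  have "((\<lambda>z. f (p z) (q z)) has_derivative
          (\<lambda>d. p' * d * f_u (p y) (q y) + q' * d * f_v (p y) (q y))) (at y)"
    unfolding has_partial_derivatives_def by fastforce
  then show ?thesis
    unfolding has_field_derivative_def assms(4)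
    by (rule has_derivative_eq_rhs) (simp add: fun_eq_iff algebra_simps)
qed

lemma pdq_eqI:
  "((\<lambda>s. F t (x(k := (x k)(i := s)))) has_real_derivative D) (at (x k i)) \<Longrightarrow> pdq k i F t x = D"
  unfolding pdq_def by (rule DERIV_imp_deriv)

lemma pdt_eqI: "((\<lambda>s. F s x) has_real_derivative D) (at t) \<Longrightarrow> pdt F t x = D"
  unfolding pdt_def by (rule DERIV_imp_deriv)

lemma TD_eqI:
  assumes "pdt F t x = D"
    "pdq 0 0 F t x = D00" "pdq 0 1 F t x = D01" "pdq 1 0 F t x = D10" "pdq 1 1 F t x = D11"
    "pdq 2 0 F t x = D20" "pdq 2 1 F t x = D21" "pdq 3 0 F t x = D30" "pdq 3 1 F t x = D31"
    "D + x 1 0 * D00 + x 1 1 * D01 + x 2 0 * D10 + x 2 1 * D11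
       + x 3 0 * D20 + x 3 1 * D21 + x 4 0 * D30 + x 4 1 * D31 = R"
  shows "TD F t x = R"
  using assms unfolding TD_def by (simp add: numeral_eq_Suc algebra_simps)

abbreviation at_base :: "(real \<Rightarrow> real \<Rightarrow> real) \<Rightarrow> jet \<Rightarrow> real"
  where "at_base f x \<equiv> f (x 0 0) (x 0 1)"

definition kinetic_energy :: "(real \<Rightarrow> real \<Rightarrow> real) \<Rightarrow> real \<Rightarrow> jet \<Rightarrow> real"
  where "kinetic_energy g t x = (at_base g x * (x 1 0)\<^sup>2 + (x 1 1)\<^sup>2) / 2"

definition energy_lagrangian :: "(real \<Rightarrow> real \<Rightarrow> real) \<Rightarrow> real \<Rightarrow> jet \<Rightarrow> real"
  where "energy_lagrangian g t x = t * TD (kinetic_energy g) t x + 2 * kinetic_energy g t x"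

context
  fixes g g_phi g_tau g_phiphi g_phitau g_tautau :: "real \<Rightarrow> real \<Rightarrow> real"
  assumes partials_g: "has_partial_derivatives g g_phi g_tau"
    and partials_g_phi: "has_partial_derivatives g_phi g_phiphi g_phitau"
    and partials_g_tau: "has_partial_derivatives g_tau g_phitau g_tautau"
begin

lemmas partials_chain = has_partial_derivatives_chain[OF partials_g]
  has_partial_derivatives_chain[OF partials_g_phi] has_partial_derivatives_chain[OF partials_g_tau]

lemma TD_kinetic_energy:
  "TD (kinetic_energy g) t x = at_base g_phi x * (x 1 0)^3 / 2 + at_base g_tau x * (x 1 0)\<^sup>2 * x 1 1 / 2
     + at_base g x * x 1 0 * x 2 0 + x 1 1 * x 2 1"
  unfolding kinetic_energy_def
  by (rule TD_eqI; (rule pdt_eqI pdq_eqI, simp, (rule derivative_eq_intros partials_chain refl | simp)+)?)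
     (simp add: algebra_simps power2_eq_square power3_eq_cube)

lemma energy_lagrangian_eq:
  "energy_lagrangian g t x =
     t * (at_base g_phi x * (x 1 0)^3 / 2 + at_base g_tau x * (x 1 0)\<^sup>2 * x 1 1 / 2
          + at_base g x * x 1 0 * x 2 0 + x 1 1 * x 2 1)
     + at_base g x * (x 1 0)\<^sup>2 + (x 1 1)\<^sup>2"
  unfolding energy_lagrangian_def TD_kinetic_energy kinetic_energy_def by simp

lemma pdq_0_0_energy_lagrangian:
  "pdq 0 0 (energy_lagrangian g) t x =
     t * (at_base g_phiphi x * (x 1 0)^3 / 2 + at_base g_phitau x * (x 1 0)\<^sup>2 * x 1 1 / 2
          + at_base g_phi x * x 1 0 * x 2 0) + at_base g_phi x * (x 1 0)\<^sup>2"
  unfolding energy_lagrangian_eq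
  by (rule pdq_eqI, simp, (rule derivative_eq_intros partials_chain refl | simp)+,
      (simp add: algebra_simps power2_eq_square)?)

lemma pdq_0_1_energy_lagrangian:
  "pdq 0 1 (energy_lagrangian g) t x =
     t * (at_base g_phitau x * (x 1 0)^3 / 2 + at_base g_tautau x * (x 1 0)\<^sup>2 * x 1 1 / 2
          + at_base g_tau x * x 1 0 * x 2 0) + at_base g_tau x * (x 1 0)\<^sup>2"
  unfolding energy_lagrangian_eq
  by (rule pdq_eqI, simp, (rule derivative_eq_intros partials_chain refl | simp)+,
      (simp add: algebra_simps power2_eq_square)?)

lemma pdq_1_0_energy_lagrangian:
  "pdq 1 0 (energy_lagrangian g) t x =
     t * (3 / 2 * at_base g_phi x * (x 1 0)\<^sup>2 + at_base g_tau x * x 1 0 * x 1 1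
          + at_base g x * x 2 0)
     + 2 * at_base g x * x 1 0"
  unfolding energy_lagrangian_eq
  by (rule pdq_eqI, simp, (rule derivative_eq_intros partials_chain refl | simp)+,
      (simp add: algebra_simps power2_eq_square)?)

lemma pdq_1_1_energy_lagrangian:
  "pdq 1 1 (energy_lagrangian g) t x = t * (at_base g_tau x * (x 1 0)\<^sup>2 / 2 + x 2 1) + 2 * x 1 1"
  unfolding energy_lagrangian_eq
  by (rule pdq_eqI, simp, (rule derivative_eq_intros partials_chain refl | simp)+,
      (simp add: algebra_simps power2_eq_square)?)

lemma pdq_2_0_energy_lagrangian: "pdq 2 0 (energy_lagrangian g) t x = t * at_base g x * x 1 0"
  unfolding energy_lagrangian_eq
  by (rule pdq_eqI, simp, (rule derivative_eq_intros partials_chain refl | simp)+)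

lemma pdq_2_1_energy_lagrangian: "pdq 2 1 (energy_lagrangian g) t x = t * x 1 1"
  unfolding energy_lagrangian_eq
  by (rule pdq_eqI, simp, (rule derivative_eq_intros partials_chain refl | simp)+)

(* The partial derivatives are rewritten with unfold, not simp: the simp rule One_nat_def would
   first turn the index 1 into Suc 0, so that the equations would no longer match. *)

lemma TD_pdq_1_0_energy_lagrangian:
  "TD (pdq 1 0 (energy_lagrangian g)) t x =
     3 / 2 * at_base g_phi x * (x 1 0)\<^sup>2 + at_base g_tau x * x 1 0 * x 1 1 + at_base g x * x 2 0
     + t * (3 / 2 * at_base g_phiphi x * (x 1 0)^3 + 5 / 2 * at_base g_phitau x * (x 1 0)\<^sup>2 * x 1 1
            + at_base g_tautau x * x 1 0 * (x 1 1)\<^sup>2 + 4 * at_base g_phi x * x 1 0 * x 2 0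
            + 2 * at_base g_tau x * x 1 1 * x 2 0 + at_base g_tau x * x 1 0 * x 2 1
            + at_base g x * x 3 0)
     + 2 * (at_base g_phi x * (x 1 0)\<^sup>2 + at_base g_tau x * x 1 0 * x 1 1 + at_base g x * x 2 0)"
  by (rule TD_eqI; (rule pdt_eqI pdq_eqI, unfold pdq_1_0_energy_lagrangian, simp,
      (rule derivative_eq_intros partials_chain refl | simp)+)?)
     (simp add: algebra_simps power2_eq_square power3_eq_cube)

lemma TD_pdq_1_1_energy_lagrangian:
  "TD (pdq 1 1 (energy_lagrangian g)) t x =
     at_base g_tau x * (x 1 0)\<^sup>2 / 2 + x 2 1
     + t * (at_base g_phitau x * (x 1 0)^3 / 2 + at_base g_tautau x * (x 1 0)\<^sup>2 * x 1 1 / 2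
            + at_base g_tau x * x 1 0 * x 2 0 + x 3 1)
     + 2 * x 2 1"
  by (rule TD_eqI; (rule pdt_eqI pdq_eqI, unfold pdq_1_1_energy_lagrangian, simp,
      (rule derivative_eq_intros partials_chain refl | simp)+)?)
     (simp add: algebra_simps power2_eq_square power3_eq_cube)

lemma TD_pdq_2_0_energy_lagrangian:
  "TD (pdq 2 0 (energy_lagrangian g)) t x =
     at_base g x * x 1 0
     + t * (at_base g_phi x * (x 1 0)\<^sup>2 + at_base g_tau x * x 1 0 * x 1 1 + at_base g x * x 2 0)"
  by (rule TD_eqI; (rule pdt_eqI pdq_eqI, unfold pdq_2_0_energy_lagrangian, simp,
      (rule derivative_eq_intros partials_chain refl | simp)+)?)
     (simp add: algebra_simps power2_eq_square power3_eq_cube)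

lemma TD_pdq_2_1_energy_lagrangian: "TD (pdq 2 1 (energy_lagrangian g)) t x = x 1 1 + t * x 2 1"
  by (rule TD_eqI; (rule pdt_eqI pdq_eqI, unfold pdq_2_1_energy_lagrangian, simp,
      (rule derivative_eq_intros partials_chain refl | simp)+)?)
     (simp add: algebra_simps)

lemma TD_TD_pdq_2_0_energy_lagrangian:
  "TD (TD (pdq 2 0 (energy_lagrangian g))) t x =
     2 * (at_base g_phi x * (x 1 0)\<^sup>2 + at_base g_tau x * x 1 0 * x 1 1 + at_base g x * x 2 0)
     + t * (at_base g_phiphi x * (x 1 0)^3 + 2 * at_base g_phitau x * (x 1 0)\<^sup>2 * x 1 1
            + at_base g_tautau x * x 1 0 * (x 1 1)\<^sup>2 + 3 * at_base g_phi x * x 1 0 * x 2 0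
            + 2 * at_base g_tau x * x 1 1 * x 2 0 + at_base g_tau x * x 1 0 * x 2 1
            + at_base g x * x 3 0)"
  by (rule TD_eqI; (rule pdt_eqI pdq_eqI, unfold TD_pdq_2_0_energy_lagrangian, simp,
      (rule derivative_eq_intros partials_chain refl | simp)+)?)
     (simp add: algebra_simps power2_eq_square power3_eq_cube)

lemma TD_TD_pdq_2_1_energy_lagrangian:
  "TD (TD (pdq 2 1 (energy_lagrangian g))) t x = 2 * x 2 1 + t * x 3 1"
  by (rule TD_eqI; (rule pdt_eqI pdq_eqI, unfold TD_pdq_2_1_energy_lagrangian, simp,
      (rule derivative_eq_intros partials_chain refl | simp)+)?)
     (simp add: algebra_simps)

lemma EL_energy_lagrangian:
  "EL (energy_lagrangian g) 0 t x =
     - at_base g_phi x * (x 1 0)\<^sup>2 / 2 - at_base g_tau x * x 1 0 * x 1 1 - at_base g x * x 2 0"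
  "EL (energy_lagrangian g) 1 t x = at_base g_tau x * (x 1 0)\<^sup>2 / 2 - x 2 1"
  unfolding EL_def pdq_0_0_energy_lagrangian pdq_0_1_energy_lagrangian
    TD_pdq_1_0_energy_lagrangian TD_pdq_1_1_energy_lagrangian
    TD_TD_pdq_2_0_energy_lagrangian TD_TD_pdq_2_1_energy_lagrangian
  by (simp_all add: algebra_simps power2_eq_square power3_eq_cube)

end

definition gM_dphi :: "real \<Rightarrow> real \<Rightarrow> real \<Rightarrow> real"
  where "gM_dphi r \<phi> \<tau> = - \<tau> * sin (\<phi>/2) * (r + \<tau> * cos (\<phi>/2))"

definition gM_dtau :: "real \<Rightarrow> real \<Rightarrow> real \<Rightarrow> real"
  where "gM_dtau r \<phi> \<tau> = kM r \<phi> \<tau> / 2"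

definition gM_dphi_dphi :: "real \<Rightarrow> real \<Rightarrow> real \<Rightarrow> real"
  where "gM_dphi_dphi r \<phi> \<tau> =
    (\<tau> * sin (\<phi>/2))\<^sup>2 / 2 - \<tau> * cos (\<phi>/2) * (r + \<tau> * cos (\<phi>/2)) / 2"

definition gM_dphi_dtau :: "real \<Rightarrow> real \<Rightarrow> real \<Rightarrow> real"
  where "gM_dphi_dtau r \<phi> \<tau> = - sin (\<phi>/2) * (r + 2 * \<tau> * cos (\<phi>/2))"

definition gM_dtau_dtau :: "real \<Rightarrow> real \<Rightarrow> real \<Rightarrow> real"
  where "gM_dtau_dtau r \<phi> \<tau> = 2 * (cos (\<phi>/2))\<^sup>2 + 1/2"

lemma has_partial_derivatives_gM: "has_partial_derivatives (gM r) (gM_dphi r) (gM_dtau r)"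
  unfolding has_partial_derivatives_def gM_def gM_dphi_def gM_dtau_def kM_def
  by (intro allI, rule has_derivative_eq_rhs, (rule derivative_intros | simp)+)
     (auto simp: fun_eq_iff field_simps power2_eq_square)

lemma has_partial_derivatives_gM_dphi:
  "has_partial_derivatives (gM_dphi r) (gM_dphi_dphi r) (gM_dphi_dtau r)"
  unfolding has_partial_derivatives_def gM_dphi_def gM_dphi_dphi_def gM_dphi_dtau_def
  by (intro allI, rule has_derivative_eq_rhs, (rule derivative_intros | simp)+)
     (auto simp: fun_eq_iff field_simps power2_eq_square)

lemma has_partial_derivatives_gM_dtau:
  "has_partial_derivatives (gM_dtau r) (gM_dphi_dtau r) (gM_dtau_dtau r)"
  unfolding has_partial_derivatives_def gM_dtau_def gM_dphi_dtau_def gM_dtau_dtau_def kM_def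
  by (intro allI, rule has_derivative_eq_rhs, (rule derivative_intros | simp)+)
     (auto simp: fun_eq_iff field_simps power2_eq_square)

lemmas gM_partial_derivatives =
  has_partial_derivatives_gM has_partial_derivatives_gM_dphi has_partial_derivatives_gM_dtau

lemma LagM_eq_energy_lagrangian: "LagM r = energy_lagrangian (gM r)"
  by (intro ext) (simp add: energy_lagrangian_eq[OF gM_partial_derivatives] LagM_def Let_def
      gM_dphi_def gM_dtau_def field_simps)

lemma epsM_eq:
  "epsM r 0 t x = - at_base (gM_dphi r) x * (x 1 0)\<^sup>2 / 2 - at_base (gM_dtau r) x * x 1 0 * x 1 1
     - at_base (gM r) x * x 2 0"
  "epsM r 1 t x = at_base (gM_dtau r) x * (x 1 0)\<^sup>2 / 2 - x 2 1"
  unfolding epsM_def Let_def gM_dphi_def gM_dtau_def by (simp_all add: algebra_simps)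

lemma EL_LagM:
  assumes "i < 2" shows "EL (LagM r) i t x = epsM r i t x"
proof -
  have "i = 0 \<or> i = 1" using assms by auto
  then show ?thesis
    unfolding LagM_eq_energy_lagrangian
    by (elim disjE) (simp_all only: EL_energy_lagrangian[OF gM_partial_derivatives] epsM_eq)
qed

lemma cos_half_diff_two_pi: "cos ((\<phi> - 2 * pi) / 2) = - cos (\<phi> / 2)"
  by (simp add: diff_divide_distrib cos_diff)

lemma sin_half_diff_two_pi: "sin ((\<phi> - 2 * pi) / 2) = - sin (\<phi> / 2)"
  by (simp add: diff_divide_distrib sin_diff)

lemma gM_transition: "gM r (\<phi> - 2 * pi) (- \<tau>) = gM r \<phi> \<tau>"
  unfolding gM_def cos_half_diff_two_pi by simp

lemma gM_dphi_transition: "gM_dphi r (\<phi> - 2 * pi) (- \<tau>) = gM_dphi r \<phi> \<tau>"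
  unfolding gM_dphi_def cos_half_diff_two_pi sin_half_diff_two_pi by simp

lemma gM_dtau_transition: "gM_dtau r (\<phi> - 2 * pi) (- \<tau>) = - gM_dtau r \<phi> \<tau>"
  unfolding gM_dtau_def kM_def cos_half_diff_two_pi by (simp add: algebra_simps)

lemmas gM_transitions = gM_transition gM_dphi_transition gM_dtau_transition

theorem mainTheorem8:
  fixes r a :: real
  assumes "0 < a" and "a < r"
  shows
    \<comment> \<open>eps is globally defined: omega^phi = omega^phi-bar, omega^tau = - omega^tau-bar on the overlap\<close>
    "(\<forall>t x. x \<in> chartB a \<and> pi < x 0 0 \<longrightarrow>
        transBA x \<in> chartA a \<and>
        epsM r 0 t (transBA x) = epsM r 0 t x \<and>
        epsM r 1 t (transBA x) = - epsM r 1 t x)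
   \<and> \<comment> \<open>the Lagrange function is globally defined\<close>
     (\<forall>t x. x \<in> chartB a \<and> pi < x 0 0 \<longrightarrow> LagM r t (transBA x) = LagM r t x)
   \<and> \<comment> \<open>its Euler-Lagrange form is eps, in both charts\<close>
     (\<forall>t x i. x \<in> chartA a \<union> chartB a \<and> i < 2 \<longrightarrow> EL (LagM r) i t x = epsM r i t x)"
proof (intro conjI allI impI)
  fix t x assume "x \<in> chartB a \<and> pi < x 0 0"
  then show "transBA x \<in> chartA a"
    unfolding chartA_def chartB_def transBA_def by auto
  show "epsM r 0 t (transBA x) = epsM r 0 t x" "epsM r 1 t (transBA x) = - epsM r 1 t x"
    unfolding epsM_eq by (simp_all add: transBA_def gM_transitions)
  show "LagM r t (transBA x) = LagM r t x"
    unfolding LagM_eq_energy_lagrangian energy_lagrangian_eq[OF gM_partial_derivatives]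
    by (simp add: transBA_def gM_transitions)
next
  fix t x and i :: nat assume "x \<in> chartA a \<union> chartB a \<and> i < 2"
  then show "EL (LagM r) i t x = epsM r i t x" by (simp add: EL_LagM)
qed

end
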